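(* Let $q \geqslant 2$ and let $\alpha_1, \ldots, \alpha_q$ be arbitrary complex numbers. Then for every integer $r$ with $1 \leqslant r < q$, $$\sum_{s=1}^q 2^{q-s}(-1)^{s-1} \sum_{1 \leqslant k_1 < \cdots < k_s \leqslant q}\ \sum_{\substack{\varepsilon_i \in \{-1,+1\}\\ 2 \leqslant i \leqslant s}} \big(\alpha_{k_1} + \varepsilon_2 \alpha_{k_2} + \cdots + \varepsilon_s \alpha_{k_s}\big)^{2r} = 0.$$
   Context: For $s=1$ the inner sum over signs is empty of variables and consists of the single term $\alpha_{k_1}^{2r}$. *)

theory Defs
  imports "HOL-Analysis.Analysis"
begin

end

theory Submission
  imports Defs "HOL-Computational_Algebra.Polynomial"
begin

text \<open>Writing \<open>\<tau>\<^sub>a\<close> for translation by \<open>a\<close>, the operator \<open>2 - \<tau>\<^sub>a - \<tau>\<^bsub>-a\<^esub>\<close>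
  is a second difference, so it lowers the degree of a polynomial by at least two, and a product
  of \<open>q > r\<close> of them annihilates \<open>t\<^sup>2\<^sup>r\<close>. Expanding the product over \<open>i \<in> {1..q}\<close>
  with steps \<open>\<alpha>\<^sub>i\<close> gives a signed sum over subsets \<open>K\<close> of sums over all sign patterns on
  \<open>K\<close>; as \<open>t\<^sup>2\<^sup>r\<close> is even, each of the latter is twice the sum with the sign of
  \<open>\<alpha>\<^bsub>min K\<^esub>\<close> fixed to \<open>+1\<close>, and the expansion becomes \<open>-2\<close> times the
  left-hand side of the theorem.\<close>

definition sign_sum :: "'i set \<Rightarrow> ('i \<Rightarrow> 'a::comm_ring_1) \<Rightarrow> ('a \<Rightarrow> 'b::comm_monoid_add) \<Rightarrow> 'a \<Rightarrow> 'b" where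
  "sign_sum K x f t = (\<Sum>\<epsilon>\<in>K \<rightarrow>\<^sub>E {-1, 1}. f (t + (\<Sum>k\<in>K. \<epsilon> k * x k)))"

lemma sign_sum_empty [simp]: "sign_sum {} x f t = f t"
  by (simp add: sign_sum_def)

lemma sign_sum_insert:
  fixes x :: "'i \<Rightarrow> 'a::{comm_ring_1, ring_char_0}"
  assumes "finite K" "i \<notin> K"
  shows "sign_sum (insert i K) x f t = sign_sum K x f (t + x i) + sign_sum K x f (t - x i)"
proof -
  have sum_upd: "(\<Sum>k\<in>insert i K. (\<epsilon>(i := y)) k * x k) = y * x i + (\<Sum>k\<in>K. \<epsilon> k * x k)"
    for \<epsilon> y
    using assms by (auto intro!: sum.cong)
  have "sign_sum (insert i K) x f t =
      (\<Sum>(y, \<epsilon>)\<in>{-1, 1} \<times> (K \<rightarrow>\<^sub>E {-1, 1}). f (t + (\<Sum>k\<in>insert i K. (\<epsilon>(i := y)) k * x k)))"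
    unfolding sign_sum_def PiE_insert_eq
    using inj_combinator[of i K "\<lambda>_. {-1, 1::'a}"] assms(2)
    by (subst sum.reindex) (simp_all add: case_prod_beta)
  also have "\<dots> = (\<Sum>y\<in>{-1, 1}. \<Sum>\<epsilon>\<in>K \<rightarrow>\<^sub>E {-1, 1}. f (t + y * x i + (\<Sum>k\<in>K. \<epsilon> k * x k)))"
    unfolding sum_upd by (simp add: sum.cartesian_product add.assoc)
  finally show ?thesis
    by (simp add: sign_sum_def add.commute)
qed

lemma sign_sum_uminus:
  assumes "\<And>z. f (- z) = f z"
  shows "sign_sum K x f (- t) = sign_sum K x f t"
proof -
  let ?neg = "\<lambda>\<epsilon>. restrict (\<lambda>k. - \<epsilon> k) K"
  have "sign_sum K x f (- t) = (\<Sum>\<epsilon>\<in>K \<rightarrow>\<^sub>E {-1, 1}. f (t + (\<Sum>k\<in>K. ?neg \<epsilon> k * x k)))"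
    unfolding sign_sum_def
    by (subst assms[symmetric]) (simp add: sum_negf[symmetric])
  also have "\<dots> = sign_sum K x f t"
    unfolding sign_sum_def
    by (rule sum.reindex_bij_witness[of _ ?neg ?neg]) (auto simp: PiE_iff extensional_def)
  finally show ?thesis .
qed

lemma sign_sum_even_remove:
  fixes x :: "'i \<Rightarrow> 'a::{comm_ring_1, ring_char_0}" and f :: "'a \<Rightarrow> 'b::semiring_1"
  assumes "finite K" "m \<in> K" and even: "\<And>z. f (- z) = f z"
  shows "sign_sum K x f 0 = 2 * sign_sum (K - {m}) x f (x m)"
proof -
  have "K = insert m (K - {m})" using assms(2) by blast
  then have "sign_sum K x f 0 = sign_sum (K - {m}) x f (x m) + sign_sum (K - {m}) x f (- x m)"
    using sign_sum_insert[of "K - {m}" m x f 0] assms(1) by simp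
  then show ?thesis
    by (simp add: sign_sum_uminus[of f, OF even] mult_2)
qed

text \<open>The expansion of \<open>(\<Prod>i\<in>I. 2 - \<tau>\<^bsub>x i\<^esub> - \<tau>\<^bsub>- x i\<^esub>) f\<close> evaluated at \<open>t\<close>.\<close>

definition iterated_second_diff ::
    "'i set \<Rightarrow> ('i \<Rightarrow> 'a::comm_ring_1) \<Rightarrow> ('a \<Rightarrow> 'b::comm_ring_1) \<Rightarrow> 'a \<Rightarrow> 'b" where
  "iterated_second_diff I x f t =
    (\<Sum>K\<in>Pow I. (-1) ^ card K * 2 ^ card (I - K) * sign_sum K x f t)"

lemma iterated_second_diff_insert:
  fixes x :: "'i \<Rightarrow> 'a::{comm_ring_1, ring_char_0}" and f :: "'a \<Rightarrow> 'b::comm_ring_1"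
  assumes "finite I" "i \<notin> I"
  shows "iterated_second_diff (insert i I) x f t =
    iterated_second_diff I x (\<lambda>s. 2 * f s - f (s + x i) - f (s - x i)) t"
proof -
  have split_term: "(-1) ^ card K * 2 ^ card (insert i I - K) * sign_sum K x f t
      + (-1) ^ card (insert i K) * 2 ^ card (I - insert i K) * sign_sum (insert i K) x f t
    = (-1) ^ card K * 2 ^ card (I - K) * sign_sum K x (\<lambda>s. 2 * f s - f (s + x i) - f (s - x i)) t"
    if "K \<subseteq> I" for K
  proof -
    have K: "finite K" "i \<notin> K" using that assms finite_subset by auto
    have card_diff: "card (insert i I - K) = Suc (card (I - K))"
      and diff_insert: "I - insert i K = I - K"
      using K assms that by (auto simp: insert_Diff_if)
    have linear: "sign_sum K x (\<lambda>s. 2 * f s - f (s + x i) - f (s - x i)) t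
        = 2 * sign_sum K x f t - sign_sum K x f (t + x i) - sign_sum K x f (t - x i)"
      by (simp add: sign_sum_def sum_subtractf sum_distrib_left add_ac diff_add_eq)
    show ?thesis
      unfolding card_diff diff_insert linear sign_sum_insert[OF K] card_insert_disjoint[OF K]
      by (simp add: algebra_simps)
  qed
  have "inj_on (insert i) (Pow I)"
    using assms(2) by (auto intro!: inj_onI)
  moreover have "Pow I \<inter> insert i ` Pow I = {}"
    using assms(2) by auto
  ultimately show ?thesis
    using assms(1)
    by (simp add: iterated_second_diff_def Pow_insert sum.union_disjoint sum.reindex
        sum.distrib[symmetric] split_term)
qed

lemma iterated_second_diff_by_card:
  assumes "finite I"
  shows "iterated_second_diff I x f t = (\<Sum>s\<le>card I. (-1) ^ s * 2 ^ (card I - s) *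
    (\<Sum>K | K \<subseteq> I \<and> card K = s. sign_sum K x f t))"
proof -
  have "iterated_second_diff I x f t = (\<Sum>s\<le>card I. \<Sum>K | K \<in> Pow I \<and> card K = s.
      (-1) ^ card K * 2 ^ card (I - K) * sign_sum K x f t)"
    unfolding iterated_second_diff_def
    using assms by (intro sum.group[symmetric]) (auto intro: card_mono)
  also have "\<dots> = (\<Sum>s\<le>card I. (-1) ^ s * 2 ^ (card I - s) *
      (\<Sum>K | K \<subseteq> I \<and> card K = s. sign_sum K x f t))"
    using assms by (auto simp: sum_distrib_left card_Diff_subset finite_subset[of _ I] intro!: sum.cong)
  finally show ?thesis .
qed

definition shift_diff :: "'a::comm_ring_1 \<Rightarrow> 'a poly \<Rightarrow> 'a poly" where
  "shift_diff a p = p \<circ>\<^sub>p [:a, 1:] - p"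

lemma poly_shift_diff: "poly (shift_diff a p) t = poly p (t + a) - poly p t"
  by (simp add: shift_diff_def poly_pcompose add.commute)

lemma shift_diff_eq_0_or_degree_less:
  fixes p :: "'a::idom poly"
  shows "shift_diff a p = 0 \<or> degree (shift_diff a p) < degree p"
proof (cases "degree p = 0")
  case True
  then show ?thesis
    by (auto simp: shift_diff_def elim!: degree_eq_zeroE)
next
  case False
  have deg: "degree (p \<circ>\<^sub>p [:a, 1:]) = degree p"
    by (simp add: degree_pcompose)
  have "degree (shift_diff a p) < degree p"
  proof (rule degree_lessI)
    show "\<forall>k\<ge>degree p. coeff (shift_diff a p) k = 0"
    proof (intro allI impI)
      fix k assume "k \<ge> degree p"
      then consider "k = degree p" | "k > degree p" by linarith
      then show "coeff (shift_diff a p) k = 0"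
        using lead_coeff_comp[of "[:a, 1:]" p] deg
        by cases (simp_all add: shift_diff_def coeff_eq_0)
    qed
  qed (use False in simp)
  then show ?thesis ..
qed

lemma iterated_second_diff_poly_eq_0:
  fixes x :: "'i \<Rightarrow> 'a::{idom, ring_char_0}"
  assumes "finite I" "degree p < 2 * card I"
  shows "iterated_second_diff I x (poly p) t = 0"
  using assms
proof (induction I arbitrary: p rule: finite_induct)
  case empty
  then show ?case by simp
next
  case (insert i I)
  define p' where "p' = shift_diff (- x i) (shift_diff (x i) p)"
  have "poly p' = (\<lambda>s. 2 * poly p s - poly p (s + x i) - poly p (s - x i))"
    by (simp add: p'_def poly_shift_diff fun_eq_iff algebra_simps)
  then have "iterated_second_diff (insert i I) x (poly p) t = iterated_second_diff I x (poly p') t"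
    using insert.hyps by (simp add: iterated_second_diff_insert)
  also have "\<dots> = 0"
  proof (cases "p' = 0")
    case True
    then show ?thesis by (simp add: iterated_second_diff_def sign_sum_def)
  next
    case False
    then have "degree p' + 2 \<le> degree p"
      using shift_diff_eq_0_or_degree_less[of "x i" p]
        shift_diff_eq_0_or_degree_less[of "- x i" "shift_diff (x i) p"]
      by (auto simp: p'_def shift_diff_def)
    then show ?thesis
      using insert by simp
  qed
  finally show ?case .
qed

lemma iterated_second_diff_even:
  fixes x :: "'i::linorder \<Rightarrow> 'a::{comm_ring_1, ring_char_0}" and f :: "'a \<Rightarrow> 'b::comm_ring_1"
  assumes "finite I" and even: "\<And>z. f (- z) = f z" and "f 0 = 0"
  shows "iterated_second_diff I x f 0 = -2 * (\<Sum>s=1..card I. 2 ^ (card I - s) * (-1) ^ (s - 1) *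
    (\<Sum>K | K \<subseteq> I \<and> card K = s. sign_sum (K - {Min K}) x f (x (Min K))))"
proof -
  let ?subsets = "\<lambda>s. {K. K \<subseteq> I \<and> card K = s}"
  have "?subsets 0 = {{}}"
    using assms(1) by (auto simp: card_eq_0_iff dest: finite_subset)
  moreover have "{..card I} = insert 0 {1..card I}"
    by auto
  ultimately have "iterated_second_diff I x f 0 = (\<Sum>s=1..card I. (-1) ^ s * 2 ^ (card I - s) *
      (\<Sum>K\<in>?subsets s. sign_sum K x f 0))"
    using assms by (simp add: iterated_second_diff_by_card)
  also have "\<dots> = (\<Sum>s=1..card I. -2 * (2 ^ (card I - s) * (-1) ^ (s - 1) *
      (\<Sum>K\<in>?subsets s. sign_sum (K - {Min K}) x f (x (Min K)))))"
  proof (intro sum.cong refl)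
    fix s assume "s \<in> {1..card I}"
    then obtain s' where s: "s = Suc s'" by (cases s) auto
    have "sign_sum K x f 0 = 2 * sign_sum (K - {Min K}) x f (x (Min K))" if "K \<in> ?subsets s" for K
      using that s assms(1) finite_subset[of K I] by (intro sign_sum_even_remove even Min_in) auto
    then show "(-1) ^ s * 2 ^ (card I - s) * (\<Sum>K\<in>?subsets s. sign_sum K x f 0) =
        -2 * (2 ^ (card I - s) * (-1) ^ (s - 1) *
          (\<Sum>K\<in>?subsets s. sign_sum (K - {Min K}) x f (x (Min K))))"
      by (simp add: s sum_distrib_left mult_ac)
  qed
  finally show ?thesis
    unfolding sum_distrib_left[of "-2"] .
qed

theorem lemma2:
  fixes q r :: nat and \<alpha> :: "nat \<Rightarrow> complex"
  assumes "q \<ge> 2" and "1 \<le> r" and "r < q"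
  shows "(\<Sum>s=1..q. 2 ^ (q - s) * (-1) ^ (s - 1) *
           (\<Sum>K\<in>{K. K \<subseteq> {1..q} \<and> card K = s}.
              \<Sum>\<epsilon>\<in>(K - {Min K}) \<rightarrow>\<^sub>E {-1, 1::complex}.
                 (\<alpha> (Min K) + (\<Sum>k\<in>K - {Min K}. \<epsilon> k * \<alpha> k)) ^ (2 * r))) = 0"
    (is "?lhs = 0")
proof -
  define f :: "complex \<Rightarrow> complex" where "f s = s ^ (2 * r)" for s
  have "f = poly (monom 1 (2 * r))"
    by (simp add: f_def poly_monom fun_eq_iff)
  then have "iterated_second_diff {1..q} \<alpha> f 0 = 0"
    using assms by (simp add: iterated_second_diff_poly_eq_0 degree_monom_eq)
  moreover have "iterated_second_diff {1..q} \<alpha> f 0 = -2 * ?lhs"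
  proof -
    have "\<And>z. f (- z) = f z" and "f 0 = 0"
      using assms(2) by (simp_all add: f_def)
    from iterated_second_diff_even[OF finite_atLeastAtMost this, of 1 q \<alpha>]
    show ?thesis
      unfolding sign_sum_def f_def by simp
  qed
  ultimately show ?thesis
    by simp
qed

end
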